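(* Let $(M,\lambda,J)$ be a contact triad with triad metric $g$, $(\dot\Sigma,j)$ a Riemann surface with boundary, and $w:\dot\Sigma\to M$ a map with $\bar\partial^\pi w=0$ such that a boundary arc of $\dot\Sigma$ is mapped into a Legendrian submanifold $R_i$. Let $z=x+iy$ be isothermal coordinates on a half-disc neighborhood of a point of this arc, with the boundary given by $\{y=0\}$ and $\partial/\partial x$ tangent to the boundary. Then along the boundary, $w$ satisfies the Neumann boundary condition $\frac{\partial w}{\partial y}\perp TR_i$ with respect to $g$.
   Context: Contact triad $(M,\lambda,J)$: contact form $\lambda$ on a $(2n+1)$-manifold, $\xi=\ker\lambda$, Reeb field $R_\lambda$, $\Pi:TM\to\xi$ projection along $R_\lambda$, $J$ endomorphism with $JR_\lambda=0$, $(J|_\xi)^2=-\mathrm{id}$, $d\lambda(Y,JY)>0$ for $0\ne Y\in\xi$; triad metric $g=d\lambda(\cdot,J\cdot)|_\xi+\lambda\otimes\lambda$. $\bar\partial^\pi w=\frac12(\Pi dw+J\,\Pi dw\circ j)$. Legendrian: $n$-dimensional submanifold with $TR\subset\xi$. Isothermal coordinates: conformal coordinates with $j\partial_x=\partial_y$. *)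

theory Defs
  imports "HOL-Analysis.Analysis"
begin

text \<open>C^k and C^infinity regularity of a map on a set S (derivatives taken within S,
  so that smoothness up to the boundary of e.g. a closed half-disc is covered).\<close>
fun Ck_on :: "nat \<Rightarrow> 'a::real_normed_vector set \<Rightarrow> ('a \<Rightarrow> 'b::real_normed_vector) \<Rightarrow> bool" where
  "Ck_on 0 S f = continuous_on S f"
| "Ck_on (Suc k) S f = (\<exists>D. (\<forall>x\<in>S. (f has_derivative D x) (at x within S)) \<and>
                            (\<forall>v. Ck_on k S (\<lambda>x. D x v)))"

definition smooth_on :: "'a::real_normed_vector set \<Rightarrow> ('a \<Rightarrow> 'b::real_normed_vector) \<Rightarrow> bool" where
  "smooth_on S f \<longleftrightarrow> (\<forall>k. Ck_on k S f)"

text \<open>A 1-form on (an open chart domain in) the manifold is given by a vector field alpha: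
  lambda_p(v) = alpha p \<bullet> v.\<close>
definition form_app :: "('a::euclidean_space \<Rightarrow> 'a) \<Rightarrow> 'a \<Rightarrow> 'a \<Rightarrow> real" where
  "form_app \<alpha> p v = \<alpha> p \<bullet> v"

definition dform :: "('a::euclidean_space \<Rightarrow> 'a) \<Rightarrow> 'a \<Rightarrow> 'a \<Rightarrow> 'a \<Rightarrow> real" where
  "dform \<alpha> p Y Z = frechet_derivative \<alpha> (at p) Y \<bullet> Z - frechet_derivative \<alpha> (at p) Z \<bullet> Y"

definition contact_distr :: "('a::euclidean_space \<Rightarrow> 'a) \<Rightarrow> 'a \<Rightarrow> 'a set" where
  "contact_distr \<alpha> p = {v. form_app \<alpha> p v = 0}"

text \<open>Contact form on the open set U: smooth, nowhere vanishing, and d lambda nondegenerate on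
  ker lambda (equivalent to lambda \<and> (d lambda)^n \<noteq> 0), in dimension 2n+1.\<close>
definition contact_form :: "nat \<Rightarrow> 'a::euclidean_space set \<Rightarrow> ('a \<Rightarrow> 'a) \<Rightarrow> bool" where
  "contact_form n U \<alpha> \<longleftrightarrow> open U \<and> DIM('a) = 2 * n + 1 \<and> smooth_on U \<alpha> \<and>
     (\<forall>p\<in>U. \<alpha> p \<noteq> 0 \<and>
        (\<forall>Y\<in>contact_distr \<alpha> p. Y \<noteq> 0 \<longrightarrow> (\<exists>Z\<in>contact_distr \<alpha> p. dform \<alpha> p Y Z \<noteq> 0)))"

definition reeb_field :: "'a::euclidean_space set \<Rightarrow> ('a \<Rightarrow> 'a) \<Rightarrow> ('a \<Rightarrow> 'a) \<Rightarrow> bool" where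
  "reeb_field U \<alpha> R \<longleftrightarrow> (\<forall>p\<in>U. form_app \<alpha> p (R p) = 1 \<and> (\<forall>Z. dform \<alpha> p (R p) Z = 0))"

definition proj_xi :: "('a::euclidean_space \<Rightarrow> 'a) \<Rightarrow> ('a \<Rightarrow> 'a) \<Rightarrow> 'a \<Rightarrow> 'a \<Rightarrow> 'a" where
  "proj_xi \<alpha> R p v = v - form_app \<alpha> p v *\<^sub>R R p"

text \<open>Contact triad (M, lambda, J), M represented by an open coordinate domain U:
  J smooth endomorphism field, J R = 0, J preserves xi, (J|xi)^2 = -id,
  d lambda(Y,JY) > 0 on xi, and d lambda(.,J.)|xi symmetric (so the triad metric is a metric).\<close>
definition contact_triad :: "nat \<Rightarrow> 'a::euclidean_space set \<Rightarrow> ('a \<Rightarrow> 'a) \<Rightarrow> ('a \<Rightarrow> 'a)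
     \<Rightarrow> ('a \<Rightarrow> 'a \<Rightarrow> 'a) \<Rightarrow> bool" where
  "contact_triad n U \<alpha> R J \<longleftrightarrow> contact_form n U \<alpha> \<and> reeb_field U \<alpha> R \<and>
     (\<forall>v. smooth_on U (\<lambda>p. J p v)) \<and>
     (\<forall>p\<in>U. linear (J p) \<and> J p (R p) = 0 \<and>
        (\<forall>Y\<in>contact_distr \<alpha> p. J p Y \<in> contact_distr \<alpha> p \<and> J p (J p Y) = - Y \<and>
            (Y \<noteq> 0 \<longrightarrow> dform \<alpha> p Y (J p Y) > 0)) \<and>
        (\<forall>Y\<in>contact_distr \<alpha> p. \<forall>Z\<in>contact_distr \<alpha> p. dform \<alpha> p Y (J p Z) = dform \<alpha> p Z (J p Y)))"

definition triad_metric :: "('a::euclidean_space \<Rightarrow> 'a) \<Rightarrow> ('a \<Rightarrow> 'a) \<Rightarrow> ('a \<Rightarrow> 'a \<Rightarrow> 'a)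
     \<Rightarrow> 'a \<Rightarrow> 'a \<Rightarrow> 'a \<Rightarrow> real" where
  "triad_metric \<alpha> R J p Y Z =
     dform \<alpha> p (proj_xi \<alpha> R p Y) (J p (proj_xi \<alpha> R p Z)) + form_app \<alpha> p Y * form_app \<alpha> p Z"

definition submfd_chart :: "'a::euclidean_space set \<Rightarrow> 'a set \<Rightarrow> 'b::euclidean_space set \<Rightarrow> ('b \<Rightarrow> 'a) \<Rightarrow> bool" where
  "submfd_chart L V W \<phi> \<longleftrightarrow> open V \<and> open W \<and> smooth_on W \<phi> \<and> \<phi> ` W = L \<inter> V \<and>
     inj_on \<phi> W \<and> continuous_on (L \<inter> V) (inv_into W \<phi>) \<and>
     (\<forall>u\<in>W. inj (frechet_derivative \<phi> (at u)))"

definition embedded_submanifold :: "'b::euclidean_space itself \<Rightarrow> 'a::euclidean_space set \<Rightarrow> bool" where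
  "embedded_submanifold _ L \<longleftrightarrow>
     (\<forall>p\<in>L. \<exists>V (W::'b set) \<phi>. p \<in> V \<and> submfd_chart L V W \<phi>)"

definition tangent_space :: "'b::euclidean_space itself \<Rightarrow> 'a::euclidean_space set \<Rightarrow> 'a \<Rightarrow> 'a set" where
  "tangent_space _ L p = {v. \<exists>V (W::'b set) \<phi> u. submfd_chart L V W \<phi> \<and> u \<in> W \<and> \<phi> u = p \<and>
                              v \<in> range (frechet_derivative \<phi> (at u))}"

definition legendrian :: "'b::euclidean_space itself \<Rightarrow> 'a::euclidean_space set \<Rightarrow> ('a \<Rightarrow> 'a) \<Rightarrow> 'a set \<Rightarrow> bool" where
  "legendrian B U \<alpha> L \<longleftrightarrow> L \<subseteq> U \<and> embedded_submanifold B L \<and>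
     (\<forall>p\<in>L. tangent_space B L p \<subseteq> contact_distr \<alpha> p)"

end

theory Submission
  imports Defs
begin

(* At a boundary point p = w(x) the tangential derivative w_x is the velocity of the
   boundary curve, which runs in the Legendrian R_i; hence w_x \<in> T_p R_i \<subseteq> \<xi>.
   Evaluating the equation \<partial>-bar^\<pi> w = 0 on \<partial>/\<partial>x gives w_x + J \<Pi> w_y = 0,
   i.e. J w_x = \<Pi> w_y. For v \<in> T_p R_i \<subseteq> \<xi>, symmetry of d\<lambda>(-, J -) on \<xi> and
   J^2 = -1 give g(w_y, v) = d\<lambda>(J w_x, J v) = d\<lambda>(w_x, v), which vanishes because a
   Legendrian submanifold is isotropic for d\<lambda>: \<lambda> pulls back to zero under a chart,
   hence so does d\<lambda>, by symmetry of second derivatives. *)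

lemma smooth_on_open_C2:
  assumes "smooth_on S f" "open S"
  obtains D1 D2 where "\<And>x. x \<in> S \<Longrightarrow> (f has_derivative D1 x) (at x)"
    and "\<And>x h. x \<in> S \<Longrightarrow> ((\<lambda>y. D1 y h) has_derivative D2 x h) (at x)"
    and "\<And>h k. continuous_on S (\<lambda>x. D2 x h k)"
proof -
  have "Ck_on 2 S f" using assms(1) by (simp add: smooth_on_def)
  then obtain D1 where D1: "\<forall>x\<in>S. (f has_derivative D1 x) (at x within S)"
    and "\<forall>h. \<exists>D. (\<forall>x\<in>S. ((\<lambda>y. D1 y h) has_derivative D x) (at x within S)) \<and>
                  (\<forall>k. continuous_on S (\<lambda>x. D x k))"
    by (auto simp: numeral_2_eq_2)
  then obtain D2 where "\<forall>h. (\<forall>x\<in>S. ((\<lambda>y. D1 y h) has_derivative D2 h x) (at x within S)) \<and>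
                  (\<forall>k. continuous_on S (\<lambda>x. D2 h x k))"
    by metis
  with D1 show ?thesis
    using that[of D1 "\<lambda>x h. D2 h x"] at_within_open[OF _ assms(2)] by auto
qed

lemma smooth_on_open_differentiable:
  assumes "smooth_on S f" "open S" "x \<in> S"
  shows "f differentiable at x"
  using smooth_on_open_C2[OF assms(1,2)] assms(3) by (metis differentiable_def)

lemma has_real_derivative_along_line:
  assumes "(G has_derivative G') (at (a + s *\<^sub>R h))"
  shows "((\<lambda>s. G (a + s *\<^sub>R h)) has_real_derivative G' h) (at s)"
proof -
  have "((\<lambda>s. a + s *\<^sub>R h) has_derivative (\<lambda>s. s *\<^sub>R h)) (at s)"
    by (auto intro!: derivative_eq_intros)
  from diff_chain_at[OF this assms]
  have "((\<lambda>s. G (a + s *\<^sub>R h)) has_derivative (\<lambda>s. G' (s *\<^sub>R h))) (at s)"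
    by (simp add: o_def)
  moreover have "G' (s *\<^sub>R h) = s * G' h" for s
    using has_derivative_linear[OF assms] by (simp add: linear_scale)
  ultimately show ?thesis by (simp add: has_field_derivative_def mult.commute[of _ "G' h"])
qed

lemma second_difference_mean_value:
  fixes F :: "'b::real_normed_vector \<Rightarrow> real"
  assumes dF: "\<And>x. x \<in> W \<Longrightarrow> (F has_derivative DF x) (at x)"
    and d2F: "\<And>x h. x \<in> W \<Longrightarrow> ((\<lambda>y. DF y h) has_derivative D2F x h) (at x)"
    and t: "t > 0"
    and box: "\<And>s \<tau>. 0 \<le> s \<Longrightarrow> s \<le> t \<Longrightarrow> 0 \<le> \<tau> \<Longrightarrow> \<tau> \<le> t \<Longrightarrow> u + s *\<^sub>R h + \<tau> *\<^sub>R k \<in> W"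
  obtains s \<tau> where "0 \<le> s" "s \<le> t" "0 \<le> \<tau>" "\<tau> \<le> t"
    and "F (u + t *\<^sub>R h + t *\<^sub>R k) - F (u + t *\<^sub>R h) - F (u + t *\<^sub>R k) + F u
           = t * t * D2F (u + s *\<^sub>R h + \<tau> *\<^sub>R k) h k"
proof -
  define \<phi> where "\<phi> s = F (u + t *\<^sub>R k + s *\<^sub>R h) - F (u + s *\<^sub>R h)" for s
  define \<phi>' where "\<phi>' s = DF (u + t *\<^sub>R k + s *\<^sub>R h) h - DF (u + s *\<^sub>R h) h" for s
  have "(\<phi> has_real_derivative \<phi>' s) (at s)" if "0 \<le> s" "s \<le> t" for s
  proof -
    have "u + t *\<^sub>R k + s *\<^sub>R h \<in> W" "u + s *\<^sub>R h \<in> W"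
      using box[of s t] box[of s 0] that t by (simp_all add: algebra_simps)
    from this[THEN dF, THEN has_real_derivative_along_line] show ?thesis
      unfolding \<phi>_def \<phi>'_def by (rule DERIV_diff)
  qed
  then obtain \<sigma> where \<sigma>: "0 < \<sigma>" "\<sigma> < t" and \<phi>_diff: "\<phi> t - \<phi> 0 = (t - 0) * \<phi>' \<sigma>"
    using MVT2[OF t, of \<phi> \<phi>'] by blast
  define \<psi> where "\<psi> \<tau> = DF (u + \<sigma> *\<^sub>R h + \<tau> *\<^sub>R k) h" for \<tau>
  define \<psi>' where "\<psi>' \<tau> = D2F (u + \<sigma> *\<^sub>R h + \<tau> *\<^sub>R k) h k" for \<tau>
  have "(\<psi> has_real_derivative \<psi>' \<tau>) (at \<tau>)" if "0 \<le> \<tau>" "\<tau> \<le> t" for \<tau>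
    unfolding \<psi>_def \<psi>'_def
    by (rule has_real_derivative_along_line[OF d2F[OF box]]) (use that \<sigma> in auto)
  then obtain \<tau> where \<tau>: "0 < \<tau>" "\<tau> < t" and \<psi>_diff: "\<psi> t - \<psi> 0 = (t - 0) * \<psi>' \<tau>"
    using MVT2[OF t, of \<psi> \<psi>'] by blast
  have "F (u + t *\<^sub>R h + t *\<^sub>R k) - F (u + t *\<^sub>R h) - F (u + t *\<^sub>R k) + F u = \<phi> t - \<phi> 0"
    by (simp add: \<phi>_def algebra_simps)
  also have "\<dots> = t * (\<psi> t - \<psi> 0)"
    using \<phi>_diff by (simp add: \<phi>'_def \<psi>_def algebra_simps)
  also have "\<dots> = t * t * D2F (u + \<sigma> *\<^sub>R h + \<tau> *\<^sub>R k) h k"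
    using \<psi>_diff by (simp add: \<psi>'_def)
  finally show ?thesis
    using \<sigma> \<tau> by (intro that[of \<sigma> \<tau>]) auto
qed

lemma small_square_in_ball:
  fixes u h k :: "'a::real_normed_vector"
  assumes "d > 0"
  obtains t where "t > 0"
    and "\<And>s \<tau>. 0 \<le> s \<Longrightarrow> s \<le> t \<Longrightarrow> 0 \<le> \<tau> \<Longrightarrow> \<tau> \<le> t \<Longrightarrow>
           dist (u + s *\<^sub>R h + \<tau> *\<^sub>R k) u < d \<and> dist (u + s *\<^sub>R k + \<tau> *\<^sub>R h) u < d"
proof
  define t where "t = d / (norm h + norm k + 1)"
  have norms_pos: "norm h + norm k + 1 > 0"
    by (simp add: add_nonneg_pos)
  then show "t > 0"
    using \<open>d > 0\<close> by (simp add: t_def)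
  then have "t * (norm h + norm k) < t * (norm h + norm k + 1)"
    by simp
  also have "\<dots> = d"
    using norms_pos by (simp add: t_def)
  finally have t_small: "t * (norm h + norm k) < d" .
  have "dist (u + s *\<^sub>R a + \<tau> *\<^sub>R b) u < d"
    if "0 \<le> s" "s \<le> t" "0 \<le> \<tau>" "\<tau> \<le> t" "norm a + norm b = norm h + norm k" for s \<tau> a b
  proof -
    have "dist (u + s *\<^sub>R a + \<tau> *\<^sub>R b) u \<le> s * norm a + \<tau> * norm b"
      using norm_triangle_ineq[of "s *\<^sub>R a" "\<tau> *\<^sub>R b"] that by (simp add: dist_norm)
    also have "\<dots> \<le> t * (norm h + norm k)"
      using that by (metis distrib_left add_mono mult_right_mono norm_ge_zero)
    finally show ?thesis
      using t_small by linarith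
  qed
  then show "dist (u + s *\<^sub>R h + \<tau> *\<^sub>R k) u < d \<and> dist (u + s *\<^sub>R k + \<tau> *\<^sub>R h) u < d"
    if "0 \<le> s" "s \<le> t" "0 \<le> \<tau>" "\<tau> \<le> t" for s \<tau>
    using that by (simp add: add.commute)
qed

lemma second_derivative_symmetric:
  fixes F :: "'b::real_normed_vector \<Rightarrow> real"
  assumes W: "open W" "u \<in> W"
    and dF: "\<And>x. x \<in> W \<Longrightarrow> (F has_derivative DF x) (at x)"
    and d2F: "\<And>x h. x \<in> W \<Longrightarrow> ((\<lambda>y. DF y h) has_derivative D2F x h) (at x)"
    and cont: "\<And>h k. continuous_on W (\<lambda>x. D2F x h k)"
  shows "D2F u h k = D2F u k h"
proof (rule dense_eq0_I[THEN eq_iff_diff_eq_0[THEN iffD2]])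
  fix e :: real
  assume "e > 0"
  have "((\<lambda>x. D2F x a b) \<longlongrightarrow> D2F u a b) (nhds u)" for a b
    using cont[of a b] W
    by (metis continuous_on_eq_continuous_at isCont_def tendsto_at_iff_tendsto_nhds)
  with \<open>e > 0\<close> have "\<forall>\<^sub>F x in nhds u. x \<in> W \<and>
      dist (D2F x h k) (D2F u h k) < e / 2 \<and> dist (D2F x k h) (D2F u k h) < e / 2"
    using W by (intro eventually_conj eventually_nhds_in_open tendstoD) auto
  then obtain d where "d > 0" and near: "\<And>x. dist x u < d \<Longrightarrow> x \<in> W \<and>
      \<bar>D2F x h k - D2F u h k\<bar> < e / 2 \<and> \<bar>D2F x k h - D2F u k h\<bar> < e / 2"
    unfolding eventually_nhds_metric dist_real_def by blast
  obtain t where "t > 0" and box: "\<And>s \<tau>. 0 \<le> s \<Longrightarrow> s \<le> t \<Longrightarrow> 0 \<le> \<tau> \<Longrightarrow> \<tau> \<le> t \<Longrightarrow>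
      dist (u + s *\<^sub>R h + \<tau> *\<^sub>R k) u < d \<and> dist (u + s *\<^sub>R k + \<tau> *\<^sub>R h) u < d"
    using small_square_in_ball[OF \<open>d > 0\<close>] by blast
  obtain s1 \<tau>1 where "0 \<le> s1" "s1 \<le> t" "0 \<le> \<tau>1" "\<tau>1 \<le> t"
    and hk: "F (u + t *\<^sub>R h + t *\<^sub>R k) - F (u + t *\<^sub>R h) - F (u + t *\<^sub>R k) + F u
           = t * t * D2F (u + s1 *\<^sub>R h + \<tau>1 *\<^sub>R k) h k"
    by (rule second_difference_mean_value[OF dF d2F \<open>t > 0\<close>]) (use box near in auto)
  obtain s2 \<tau>2 where "0 \<le> s2" "s2 \<le> t" "0 \<le> \<tau>2" "\<tau>2 \<le> t"
    and kh: "F (u + t *\<^sub>R k + t *\<^sub>R h) - F (u + t *\<^sub>R k) - F (u + t *\<^sub>R h) + F u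
           = t * t * D2F (u + s2 *\<^sub>R k + \<tau>2 *\<^sub>R h) k h"
    by (rule second_difference_mean_value[OF dF d2F \<open>t > 0\<close>]) (use box near in auto)
  have "D2F (u + s1 *\<^sub>R h + \<tau>1 *\<^sub>R k) h k = D2F (u + s2 *\<^sub>R k + \<tau>2 *\<^sub>R h) k h"
    using hk kh \<open>t > 0\<close> by (simp add: algebra_simps)
  moreover have "\<bar>D2F (u + s1 *\<^sub>R h + \<tau>1 *\<^sub>R k) h k - D2F u h k\<bar> < e / 2"
    using near box[of s1 \<tau>1] \<open>0 \<le> s1\<close> \<open>s1 \<le> t\<close> \<open>0 \<le> \<tau>1\<close> \<open>\<tau>1 \<le> t\<close> by auto
  moreover have "\<bar>D2F (u + s2 *\<^sub>R k + \<tau>2 *\<^sub>R h) k h - D2F u k h\<bar> < e / 2"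
    using near box[of s2 \<tau>2] \<open>0 \<le> s2\<close> \<open>s2 \<le> t\<close> \<open>0 \<le> \<tau>2\<close> \<open>\<tau>2 \<le> t\<close> by auto
  ultimately show "\<bar>D2F u h k - D2F u k h\<bar> \<le> e"
    by linarith
qed

(* Differentiating \<alpha>(\<phi> x) \<bullet> D\<phi>_x h = 0 in direction k gives
   \<alpha> \<bullet> D^2\<phi>(h, k) + D\<alpha>(D\<phi> k) \<bullet> D\<phi> h = 0, and the first term is symmetric in h, k. *)

lemma dform_pullback_eq_0:
  fixes \<phi> :: "'b::euclidean_space \<Rightarrow> 'a::euclidean_space"
  assumes "smooth_on W \<phi>" "open W" "u \<in> W"
    and "\<alpha> differentiable at (\<phi> u)"
    and pullback: "\<And>x h. x \<in> W \<Longrightarrow> \<alpha> (\<phi> x) \<bullet> frechet_derivative \<phi> (at x) h = 0"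
  shows "dform \<alpha> (\<phi> u) (frechet_derivative \<phi> (at u) h) (frechet_derivative \<phi> (at u) k) = 0"
proof -
  obtain D1 D2 where D1: "\<And>x. x \<in> W \<Longrightarrow> (\<phi> has_derivative D1 x) (at x)"
    and D2: "\<And>x h. x \<in> W \<Longrightarrow> ((\<lambda>y. D1 y h) has_derivative D2 x h) (at x)"
    and D2_cont: "\<And>h k. continuous_on W (\<lambda>x. D2 x h k)"
    using smooth_on_open_C2[OF assms(1,2)] by blast
  have fd: "frechet_derivative \<phi> (at x) = D1 x" if "x \<in> W" for x
    using frechet_derivative_at[OF D1[OF that]] by simp
  define D\<alpha> where "D\<alpha> = frechet_derivative \<alpha> (at (\<phi> u))"
  have "(\<alpha> has_derivative D\<alpha>) (at (\<phi> u))"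
    using assms(4) by (simp add: D\<alpha>_def frechet_derivative_works)
  then have \<alpha>\<phi>: "((\<lambda>x. \<alpha> (\<phi> x)) has_derivative (\<lambda>k. D\<alpha> (D1 u k))) (at u)"
    using diff_chain_at[OF D1[OF \<open>u \<in> W\<close>]] by (simp add: o_def)
  have d_product: "((\<lambda>x. \<alpha> (\<phi> x) \<bullet> D1 x h) has_derivative
               (\<lambda>k. \<alpha> (\<phi> u) \<bullet> D2 u h k + D\<alpha> (D1 u k) \<bullet> D1 u h)) (at u)" for h
    using has_derivative_inner[OF \<alpha>\<phi> D2[OF \<open>u \<in> W\<close>]] by simp
  have d_zero: "((\<lambda>x. \<alpha> (\<phi> x) \<bullet> D1 x h) has_derivative (\<lambda>k. 0)) (at u)" for h
    by (rule has_derivative_transform_within_open[OF has_derivative_const assms(2,3)])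
      (use pullback fd in simp)
  have product_rule: "\<alpha> (\<phi> u) \<bullet> D2 u h k + D\<alpha> (D1 u k) \<bullet> D1 u h = 0" for h k
    using fun_cong[OF has_derivative_unique[OF d_product[of h] d_zero[of h]], of k] by simp
  have "\<alpha> (\<phi> u) \<bullet> D2 u h k = \<alpha> (\<phi> u) \<bullet> D2 u k h"
  proof (rule second_derivative_symmetric[OF assms(2,3), where F = "\<lambda>x. \<alpha> (\<phi> u) \<bullet> \<phi> x"
        and DF = "\<lambda>x h. \<alpha> (\<phi> u) \<bullet> D1 x h" and D2F = "\<lambda>x h k. \<alpha> (\<phi> u) \<bullet> D2 x h k"])
    show "((\<lambda>x. \<alpha> (\<phi> u) \<bullet> \<phi> x) has_derivative (\<lambda>h. \<alpha> (\<phi> u) \<bullet> D1 x h)) (at x)"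
      if "x \<in> W" for x
      using has_derivative_inner_right[OF D1[OF that]] by simp
    show "((\<lambda>y. \<alpha> (\<phi> u) \<bullet> D1 y h) has_derivative (\<lambda>k. \<alpha> (\<phi> u) \<bullet> D2 x h k)) (at x)"
      if "x \<in> W" for x h
      using has_derivative_inner_right[OF D2[OF that]] by simp
    show "continuous_on W (\<lambda>x. \<alpha> (\<phi> u) \<bullet> D2 x h k)" for h k
      by (intro continuous_intros D2_cont)
  qed
  then show ?thesis
    using product_rule[of h k] product_rule[of k h] fd[OF \<open>u \<in> W\<close>]
    by (simp add: dform_def D\<alpha>_def[symmetric] inner_commute)
qed

lemma legendrian_chart_dform_eq_0:
  fixes \<phi> :: "'b::euclidean_space \<Rightarrow> 'a::euclidean_space"
  assumes "legendrian TYPE('b) U \<alpha> L" "contact_form n U \<alpha>"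
    and chart: "submfd_chart L V W \<phi>" and "u \<in> W"
  shows "dform \<alpha> (\<phi> u) (frechet_derivative \<phi> (at u) h) (frechet_derivative \<phi> (at u) k) = 0"
proof (rule dform_pullback_eq_0)
  show "smooth_on W \<phi>" "open W"
    using chart by (simp_all add: submfd_chart_def)
  have \<phi>_L: "\<phi> x \<in> L" if "x \<in> W" for x
    using chart that by (auto simp: submfd_chart_def)
  then show "\<alpha> differentiable at (\<phi> u)"
    using assms(1,2) \<open>u \<in> W\<close> smooth_on_open_differentiable
    by (metis contact_form_def legendrian_def subsetD)
  show "\<alpha> (\<phi> x) \<bullet> frechet_derivative \<phi> (at x) h = 0" if "x \<in> W" for x h
    using assms(1) \<phi>_L[OF that] chart that
    by (fastforce simp: legendrian_def tangent_space_def contact_distr_def form_app_def)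
qed (fact \<open>u \<in> W\<close>)

lemma has_derivative_inj_near_range:
  fixes \<phi> :: "'a::real_normed_vector \<Rightarrow> 'b::euclidean_space"
  assumes d\<phi>: "(\<phi> has_derivative A) (at u)" and "inj A" and "\<epsilon> > 0"
  obtains d where "d > 0"
    and "\<And>y. norm (y - u) < d \<Longrightarrow> norm (\<phi> y - \<phi> u - A (y - u)) \<le> \<epsilon> * norm (\<phi> y - \<phi> u)"
proof -
  obtain m where "m > 0" and m: "\<And>x. m * norm x \<le> norm (A x)"
    using linear_inj_bounded_below_pos[OF has_derivative_linear[OF d\<phi>] \<open>inj A\<close>] by blast
  define e where "e = min (m / 2) (\<epsilon> * m / 2)"
  have "e > 0" "e \<le> m / 2" "e \<le> \<epsilon> * m / 2"
    using \<open>m > 0\<close> \<open>\<epsilon> > 0\<close> by (simp_all add: e_def)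
  then obtain d where "d > 0"
    and d: "\<And>y. norm (y - u) < d \<Longrightarrow> norm (\<phi> y - \<phi> u - A (y - u)) \<le> e * norm (y - u)"
    using d\<phi> unfolding has_derivative_at_alt by blast
  show ?thesis
  proof (rule that[OF \<open>d > 0\<close>])
    fix y
    assume "norm (y - u) < d"
    then have E: "norm (\<phi> y - \<phi> u - A (y - u)) \<le> e * norm (y - u)"
      by (rule d)
    have "m * norm (y - u) \<le> norm (\<phi> y - \<phi> u) + norm (\<phi> y - \<phi> u - A (y - u))"
      using m[of "y - u"] norm_triangle_ineq4[of "\<phi> y - \<phi> u" "\<phi> y - \<phi> u - A (y - u)"]
      by simp
    also have "\<dots> \<le> norm (\<phi> y - \<phi> u) + m / 2 * norm (y - u)"
      using E mult_right_mono[OF \<open>e \<le> m / 2\<close>, of "norm (y - u)"] by simp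
    finally have "m * norm (y - u) \<le> 2 * norm (\<phi> y - \<phi> u)"
      by simp
    have "e * norm (y - u) \<le> \<epsilon> * m / 2 * norm (y - u)"
      using mult_right_mono[OF \<open>e \<le> \<epsilon> * m / 2\<close>] by simp
    also have "\<dots> = \<epsilon> / 2 * (m * norm (y - u))"
      by simp
    also have "\<dots> \<le> \<epsilon> / 2 * (2 * norm (\<phi> y - \<phi> u))"
      using \<open>\<epsilon> > 0\<close> \<open>m * norm (y - u) \<le> 2 * norm (\<phi> y - \<phi> u)\<close> by (intro mult_left_mono) auto
    finally have "e * norm (y - u) \<le> \<epsilon> * norm (\<phi> y - \<phi> u)"
      by simp
    with E show "norm (\<phi> y - \<phi> u - A (y - u)) \<le> \<epsilon> * norm (\<phi> y - \<phi> u)"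
      by linarith
  qed
qed

lemma norm_sub_le_of_relative_error:
  fixes \<Delta> a g :: "'a::real_normed_vector"
  assumes "s > 0" "\<epsilon> > 0"
    and \<Delta>_lin: "norm (\<Delta> - s *\<^sub>R g) \<le> min 1 (\<epsilon> / 2) * s"
    and \<Delta>_a: "norm (\<Delta> - a) \<le> \<epsilon> / (2 * (norm g + 1)) * norm \<Delta>"
  shows "norm (a - s *\<^sub>R g) \<le> \<epsilon> * s"
proof -
  have "norm g + 1 > 0"
    by (simp add: add_nonneg_pos)
  have "min 1 (\<epsilon> / 2) * s \<le> 1 * s" "min 1 (\<epsilon> / 2) * s \<le> \<epsilon> / 2 * s"
    using \<open>s > 0\<close> by (intro mult_right_mono; simp)+
  with \<Delta>_lin have "norm (\<Delta> - s *\<^sub>R g) \<le> s" "norm (\<Delta> - s *\<^sub>R g) \<le> \<epsilon> / 2 * s"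
    by simp_all
  have "norm \<Delta> \<le> norm (\<Delta> - s *\<^sub>R g) + s * norm g"
    using norm_triangle_sub[of \<Delta> "s *\<^sub>R g"] \<open>s > 0\<close> by simp
  also have "\<dots> \<le> s * (norm g + 1)"
    using \<open>norm (\<Delta> - s *\<^sub>R g) \<le> s\<close> by (simp add: algebra_simps)
  finally have "\<epsilon> / (2 * (norm g + 1)) * norm \<Delta> \<le> \<epsilon> / (2 * (norm g + 1)) * (s * (norm g + 1))"
    using \<open>\<epsilon> > 0\<close> by (intro mult_left_mono) simp_all
  also have "\<dots> = \<epsilon> / 2 * s"
    using \<open>norm g + 1 > 0\<close> by (simp add: field_simps)
  finally have "norm (\<Delta> - a) \<le> \<epsilon> / 2 * s"
    using \<Delta>_a by linarith
  then show ?thesis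
    using \<open>norm (\<Delta> - s *\<^sub>R g) \<le> \<epsilon> / 2 * s\<close> norm_triangle_ineq[of "a - \<Delta>" "\<Delta> - s *\<^sub>R g"] norm_minus_commute[of a \<Delta>]
    by simp
qed

(* The parametrisation c of the curve is only continuous, so the chain rule is not
   available. Injectivity of A makes the linearisation error of \<phi> small relative to
   the increment of \<gamma>, so difference quotients of \<gamma> approach the closed subspace range A. *)

lemma tangent_of_curve_through_image:
  fixes \<phi> :: "'b::real_normed_vector \<Rightarrow> 'a::euclidean_space" and c :: "real \<Rightarrow> 'b"
  assumes d\<phi>: "(\<phi> has_derivative A) (at u)" and "inj A"
    and d\<gamma>: "(\<gamma> has_derivative (\<lambda>s. s *\<^sub>R g)) (at t0)"
    and c_cont: "continuous (at t0) c" and "c t0 = u" and "\<gamma> t0 = \<phi> u"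
    and \<gamma>_eq: "\<forall>\<^sub>F t in at t0. \<gamma> t = \<phi> (c t)"
  shows "g \<in> range A"
proof -
  have "closed (range A)"
    by (intro closed_subspace linear_subspace_image has_derivative_linear[OF d\<phi>] subspace_UNIV)
  moreover have "\<exists>z\<in>range A. dist z g \<le> \<epsilon>" if "\<epsilon> > 0" for \<epsilon>
  proof -
    obtain d1 where "d1 > 0" and near_range: "\<And>y. norm (y - u) < d1 \<Longrightarrow>
        norm (\<phi> y - \<phi> u - A (y - u)) \<le> \<epsilon> / (2 * (norm g + 1)) * norm (\<phi> y - \<phi> u)"
      using has_derivative_inj_near_range[OF d\<phi> \<open>inj A\<close>, of "\<epsilon> / (2 * (norm g + 1))"] \<open>\<epsilon> > 0\<close>
      by (metis add_nonneg_pos divide_pos_pos mult_pos_pos norm_ge_zero zero_less_numeral zero_less_one)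
    define e where "e = min 1 (\<epsilon> / 2)"
    have "\<forall>\<^sub>F t in at t0. \<gamma> t = \<phi> (c t) \<and> norm (c t - u) < d1 \<and>
        norm (\<gamma> t - \<gamma> t0 - (t - t0) *\<^sub>R g) \<le> e * norm (t - t0)"
    proof (intro eventually_conj \<gamma>_eq)
      show "\<forall>\<^sub>F t in at t0. norm (c t - u) < d1"
        using c_cont \<open>d1 > 0\<close> \<open>c t0 = u\<close> by (auto simp: continuous_at dist_norm dest: tendstoD)
      show "\<forall>\<^sub>F t in at t0. norm (\<gamma> t - \<gamma> t0 - (t - t0) *\<^sub>R g) \<le> e * norm (t - t0)"
        using d\<gamma> \<open>\<epsilon> > 0\<close> unfolding has_derivative_at_alt eventually_at dist_norm e_def
        by (metis min_less_iff_conj zero_less_divide_iff zero_less_numeral zero_less_one)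
    qed
    then obtain d where "d > 0" and near_t0: "\<And>t. t \<noteq> t0 \<Longrightarrow> dist t t0 < d \<Longrightarrow>
        \<gamma> t = \<phi> (c t) \<and> norm (c t - u) < d1 \<and>
        norm (\<gamma> t - \<gamma> t0 - (t - t0) *\<^sub>R g) \<le> e * norm (t - t0)"
      unfolding eventually_at by blast
    define s where "s = d / 2"
    define y where "y = c (t0 + s) - u"
    have "s > 0"
      using \<open>d > 0\<close> by (simp add: s_def)
    then have "norm (\<gamma> (t0 + s) - \<gamma> t0 - s *\<^sub>R g) \<le> e * s"
      and "norm (\<gamma> (t0 + s) - \<gamma> t0 - A y) \<le> \<epsilon> / (2 * (norm g + 1)) * norm (\<gamma> (t0 + s) - \<gamma> t0)"
      using near_t0[of "t0 + s"] near_range[of "c (t0 + s)"] \<open>\<gamma> t0 = \<phi> u\<close> \<open>c t0 = u\<close>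
      by (auto simp: s_def dist_norm y_def)
    then have "norm (A y - s *\<^sub>R g) \<le> \<epsilon> * s"
      unfolding e_def by (rule norm_sub_le_of_relative_error[OF \<open>s > 0\<close> \<open>\<epsilon> > 0\<close>])
    moreover have "A (y /\<^sub>R s) - g = (A y - s *\<^sub>R g) /\<^sub>R s"
      using \<open>s > 0\<close> linear_scale[OF has_derivative_linear[OF d\<phi>]] by (simp add: algebra_simps)
    then have "dist (A (y /\<^sub>R s)) g = norm (A y - s *\<^sub>R g) / s"
      using \<open>s > 0\<close> by (simp add: dist_norm divide_inverse_commute)
    ultimately have "dist (A (y /\<^sub>R s)) g \<le> \<epsilon>"
      using \<open>s > 0\<close> by (simp add: divide_le_eq)
    then show ?thesis
      by blast
  qed
  ultimately show ?thesis
    by (metis closure_approachable_le closure_closed)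
qed

lemma submfd_chart_curve_tangent:
  fixes \<phi> :: "'b::euclidean_space \<Rightarrow> 'a::euclidean_space" and \<gamma> :: "real \<Rightarrow> 'a"
  assumes chart: "submfd_chart L V W \<phi>" and "u \<in> W"
    and "open I" "t0 \<in> I" "continuous_on I \<gamma>" "\<gamma> ` I \<subseteq> L" "\<gamma> t0 = \<phi> u"
    and d\<gamma>: "(\<gamma> has_derivative (\<lambda>s. s *\<^sub>R g)) (at t0)"
  shows "g \<in> range (frechet_derivative \<phi> (at u))"
proof -
  have "open V" "open W" "smooth_on W \<phi>" and \<phi>_image: "\<phi> ` W = L \<inter> V" and "inj_on \<phi> W"
    and inv_cont: "continuous_on (L \<inter> V) (inv_into W \<phi>)"
    and "inj (frechet_derivative \<phi> (at u))"
    using chart \<open>u \<in> W\<close> by (auto simp: submfd_chart_def)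
  define T where "T = I \<inter> \<gamma> -` V"
  define c where "c = inv_into W \<phi> \<circ> \<gamma>"
  have "open T"
    unfolding T_def using \<open>continuous_on I \<gamma>\<close> \<open>open I\<close> \<open>open V\<close> by (rule continuous_open_preimage)
  moreover have "t0 \<in> T"
    using \<open>t0 \<in> I\<close> \<open>\<gamma> t0 = \<phi> u\<close> \<phi>_image \<open>u \<in> W\<close> by (auto simp: T_def)
  moreover have \<gamma>_T: "\<gamma> ` T \<subseteq> L \<inter> V"
    using \<open>\<gamma> ` I \<subseteq> L\<close> by (auto simp: T_def)
  ultimately have "continuous (at t0) c"
    unfolding c_def
    using continuous_on_compose[OF continuous_on_subset[OF \<open>continuous_on I \<gamma>\<close>] continuous_on_subset[OF inv_cont \<gamma>_T]]
    by (metis Int_lower1 T_def continuous_on_eq_continuous_at)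
  moreover have "c t0 = u"
    using \<open>\<gamma> t0 = \<phi> u\<close> \<open>inj_on \<phi> W\<close> \<open>u \<in> W\<close> by (simp add: c_def)
  moreover have "\<gamma> t = \<phi> (c t)" if "t \<in> T" for t
    using \<gamma>_T \<phi>_image that by (metis c_def comp_apply f_inv_into_f image_subset_iff)
  then have "\<forall>\<^sub>F t in at t0. \<gamma> t = \<phi> (c t)"
    using \<open>open T\<close> \<open>t0 \<in> T\<close> by (auto simp: eventually_at_topological)
  moreover have "(\<phi> has_derivative frechet_derivative \<phi> (at u)) (at u)"
    using smooth_on_open_differentiable[OF \<open>smooth_on W \<phi>\<close> \<open>open W\<close> \<open>u \<in> W\<close>]
    by (simp add: frechet_derivative_works)
  ultimately show ?thesis
    using tangent_of_curve_through_image[OF _ \<open>inj (frechet_derivative \<phi> (at u))\<close> d\<gamma>] \<open>\<gamma> t0 = \<phi> u\<close>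
    by blast
qed

lemma has_derivative_along_real_axis:
  fixes w :: "complex \<Rightarrow> 'a::real_normed_vector"
  assumes "(w has_derivative D) (at (complex_of_real t) within H)"
    and "open I" "t \<in> I" "complex_of_real ` I \<subseteq> H"
  shows "((\<lambda>s. w (complex_of_real s)) has_derivative (\<lambda>s. s *\<^sub>R D 1)) (at t)"
proof -
  have "(complex_of_real has_derivative complex_of_real) (at t within I)"
    using has_derivative_of_real[OF has_derivative_ident] by simp
  moreover have "(w has_derivative D) (at (complex_of_real t) within complex_of_real ` I)"
    using has_derivative_subset[OF assms(1,4)] .
  ultimately have "((w \<circ> complex_of_real) has_derivative (D \<circ> complex_of_real)) (at t within I)"
    by (rule diff_chain_within)
  moreover have "D (complex_of_real s) = s *\<^sub>R D 1" for s
    using linear_scale[OF has_derivative_linear[OF assms(1)], of s 1] by (simp add: scaleR_conv_of_real)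
  ultimately show ?thesis
    using at_within_open[OF assms(3,2)] by (simp add: o_def)
qed

lemma triad_metric_eq_dform_if_dbar:
  assumes triad: "contact_triad n U \<alpha> R J" and "p \<in> U"
    and g: "g \<in> contact_distr \<alpha> p" and v: "v \<in> contact_distr \<alpha> p"
    and dbar: "proj_xi \<alpha> R p g + J p (proj_xi \<alpha> R p b) = 0"
  shows "triad_metric \<alpha> R J p b v = dform \<alpha> p g v"
proof -
  have "smooth_on U \<alpha>" "open U" and "form_app \<alpha> p (R p) = 1" and "linear (J p)"
    and J_xi: "\<And>Y. Y \<in> contact_distr \<alpha> p \<Longrightarrow> J p Y \<in> contact_distr \<alpha> p \<and> J p (J p Y) = - Y"
    and J_sym: "\<And>Y Z. Y \<in> contact_distr \<alpha> p \<Longrightarrow> Z \<in> contact_distr \<alpha> p \<Longrightarrow>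
                  dform \<alpha> p Y (J p Z) = dform \<alpha> p Z (J p Y)"
    using triad \<open>p \<in> U\<close> by (auto simp: contact_triad_def contact_form_def reeb_field_def)
  have "linear (frechet_derivative \<alpha> (at p))"
    using smooth_on_open_differentiable[OF \<open>smooth_on U \<alpha>\<close> \<open>open U\<close> \<open>p \<in> U\<close>]
    by (simp add: frechet_derivative_works has_derivative_linear)
  define Pb where "Pb = proj_xi \<alpha> R p b"
  have "Pb \<in> contact_distr \<alpha> p"
    using \<open>form_app \<alpha> p (R p) = 1\<close>
    by (simp add: Pb_def proj_xi_def contact_distr_def form_app_def inner_diff_right)
  have "proj_xi \<alpha> R p g = g" "proj_xi \<alpha> R p v = v"
    using g v by (simp_all add: proj_xi_def contact_distr_def)
  with dbar have "J p g = Pb"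
    using J_xi[OF \<open>Pb \<in> contact_distr \<alpha> p\<close>] linear_neg[OF \<open>linear (J p)\<close>]
    by (metis Pb_def add_eq_0_iff minus_equation_iff)
  have "triad_metric \<alpha> R J p b v = dform \<alpha> p (J p g) (J p v)"
    using v \<open>proj_xi \<alpha> R p v = v\<close> \<open>J p g = Pb\<close>
    by (simp add: triad_metric_def Pb_def contact_distr_def)
  also have "\<dots> = dform \<alpha> p v (- g)"
    using J_sym[OF v conjunct1[OF J_xi[OF g]]] J_xi[OF g] by simp
  also have "\<dots> = dform \<alpha> p g v"
    using linear_neg[OF \<open>linear (frechet_derivative \<alpha> (at p))\<close>] by (simp add: dform_def)
  finally show ?thesis .
qed

lemma legendrian_boundary_curve_neumann:
  fixes \<gamma> :: "real \<Rightarrow> 'a::euclidean_space"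
  assumes triad: "contact_triad n U \<alpha> R J" and leg: "legendrian TYPE('b::euclidean_space) U \<alpha> L"
    and "open I" "x \<in> I" "\<gamma> ` I \<subseteq> L"
    and d\<gamma>: "\<And>t. t \<in> I \<Longrightarrow> (\<gamma> has_derivative (\<lambda>s. s *\<^sub>R g t)) (at t)"
    and dbar: "proj_xi \<alpha> R (\<gamma> x) (g x) + J (\<gamma> x) (proj_xi \<alpha> R (\<gamma> x) b) = 0"
    and "v \<in> tangent_space TYPE('b) L (\<gamma> x)"
  shows "triad_metric \<alpha> R J (\<gamma> x) b v = 0"
proof -
  obtain V and W :: "'b set" and \<phi> u h where chart: "submfd_chart L V W \<phi>" "u \<in> W"
    and "\<phi> u = \<gamma> x" and v: "v = frechet_derivative \<phi> (at u) h"
    using \<open>v \<in> tangent_space TYPE('b) L (\<gamma> x)\<close> unfolding tangent_space_def by blast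
  have "continuous_on I \<gamma>"
    using d\<gamma> by (meson continuous_at_imp_continuous_on has_derivative_continuous)
  then have "g x \<in> range (frechet_derivative \<phi> (at u))"
    using \<open>\<phi> u = \<gamma> x\<close> d\<gamma>[OF \<open>x \<in> I\<close>]
    by (intro submfd_chart_curve_tangent[OF chart \<open>open I\<close> \<open>x \<in> I\<close> _ \<open>\<gamma> ` I \<subseteq> L\<close>]) auto
  then obtain k where k: "g x = frechet_derivative \<phi> (at u) k"
    by blast
  have "frechet_derivative \<phi> (at u) k' \<in> tangent_space TYPE('b) L (\<gamma> x)" for k'
    unfolding tangent_space_def using chart \<open>\<phi> u = \<gamma> x\<close> by blast
  moreover have "\<gamma> x \<in> L" "L \<subseteq> U"
    using \<open>x \<in> I\<close> \<open>\<gamma> ` I \<subseteq> L\<close> leg by (auto simp: legendrian_def)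
  ultimately have xi: "frechet_derivative \<phi> (at u) k' \<in> contact_distr \<alpha> (\<gamma> x)" for k'
    using leg by (auto simp: legendrian_def)
  have "triad_metric \<alpha> R J (\<gamma> x) b v = dform \<alpha> (\<gamma> x) (g x) v"
    using \<open>\<gamma> x \<in> L\<close> \<open>L \<subseteq> U\<close> xi[of k, folded k] xi[of h, folded v]
    by (intro triad_metric_eq_dform_if_dbar[OF triad _ _ _ dbar]) blast+
  also have "\<dots> = 0"
    using legendrian_chart_dform_eq_0[OF leg _ chart] triad k v \<open>\<phi> u = \<gamma> x\<close>
    unfolding contact_triad_def by metis
  finally show ?thesis .
qed

theorem lemma3p5:
  fixes U :: "'a::euclidean_space set"
    and \<alpha> Reeb :: "'a \<Rightarrow> 'a" and J :: "'a \<Rightarrow> 'a \<Rightarrow> 'a"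
    and Ri :: "'a set"
    and w :: "complex \<Rightarrow> 'a" and Dw :: "complex \<Rightarrow> complex \<Rightarrow> 'a"
    and r :: real
  assumes triad: "contact_triad DIM('b::euclidean_space) U \<alpha> Reeb J"
    and leg: "legendrian TYPE('b) U \<alpha> Ri"
    and r_pos: "r > 0"
    and w_smooth: "smooth_on {z. cmod z < r \<and> Im z \<ge> 0} w"
    and w_maps: "\<forall>z. cmod z < r \<and> Im z \<ge> 0 \<longrightarrow> w z \<in> U"
    and w_deriv: "\<forall>z. cmod z < r \<and> Im z \<ge> 0 \<longrightarrow>
                    (w has_derivative Dw z) (at z within {z. cmod z < r \<and> Im z \<ge> 0})"
    and dbar: "\<forall>z h. cmod z < r \<and> Im z \<ge> 0 \<longrightarrow>
                 proj_xi \<alpha> Reeb (w z) (Dw z h)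
                 + J (w z) (proj_xi \<alpha> Reeb (w z) (Dw z (\<i> * h))) = 0"
    and bdry: "\<forall>x::real. \<bar>x\<bar> < r \<longrightarrow> w (complex_of_real x) \<in> Ri"
  shows "\<forall>x::real. \<bar>x\<bar> < r \<longrightarrow>
           (\<forall>v\<in>tangent_space TYPE('b) Ri (w (complex_of_real x)).
              triad_metric \<alpha> Reeb J (w (complex_of_real x)) (Dw (complex_of_real x) \<i>) v = 0)"
proof (intro allI impI ballI)
  fix x :: real and v
  assume "\<bar>x\<bar> < r" and v: "v \<in> tangent_space TYPE('b) Ri (w (complex_of_real x))"
  define I where "I = {t. \<bar>t\<bar> < r}"
  have "open I" "x \<in> I"
    using \<open>\<bar>x\<bar> < r\<close> by (simp_all add: I_def open_Collect_less continuous_intros)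
  have curve_deriv: "((\<lambda>t. w (complex_of_real t)) has_derivative
      (\<lambda>s. s *\<^sub>R Dw (complex_of_real t) 1)) (at t)" if "t \<in> I" for t
    by (rule has_derivative_along_real_axis[OF _ \<open>open I\<close> that, of w _ "{z. cmod z < r \<and> Im z \<ge> 0}"])
      (use w_deriv that in \<open>auto simp: I_def\<close>)
  have curve_in_Ri: "(\<lambda>t. w (complex_of_real t)) ` I \<subseteq> Ri"
    using bdry by (auto simp: I_def)
  have dbar_x: "proj_xi \<alpha> Reeb (w (complex_of_real x)) (Dw (complex_of_real x) 1)
      + J (w (complex_of_real x)) (proj_xi \<alpha> Reeb (w (complex_of_real x)) (Dw (complex_of_real x) \<i>)) = 0"
    using dbar[rule_format, of "complex_of_real x" 1] \<open>\<bar>x\<bar> < r\<close> by simp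
  show "triad_metric \<alpha> Reeb J (w (complex_of_real x)) (Dw (complex_of_real x) \<i>) v = 0"
    by (rule legendrian_boundary_curve_neumann[OF triad leg \<open>open I\<close> \<open>x \<in> I\<close> curve_in_Ri
          curve_deriv dbar_x v])
qed

end
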